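(* Let $n\ge2$. Under the diagonal top-down model, the probability that the generated fully heterochronous ranked tree shape with $n$ leaves has $\mathbf{F}$-matrix $F$ is $$P(F)=\frac{1}{C_{n-1}}\cdot\frac{2^{n-1}}{\prod_{j=1}^{2n-2}F_{j-1,j-1}},\qquad C_{n-1}=\frac1n\binom{2n-2}{n-1}.$$
   Context: A fully heterochronous ranked tree shape with $n$ leaves is a rooted full binary tree (every node has out-degree $0$ or $2$), without leaf labels, with $n$ leaves, together with a total ordering of all $2n-1$ nodes (leaves included) such that nodes appear in increasing order along every path from the root to a leaf; the position of a node in this order, numbered $0,\dots,2n-2$, is its rank. Its $\mathbf{F}$-matrix is the $(2n-2)\times(2n-2)$ lower triangular matrix $F$, indices from $0$ to $2n-3$, where for $0\le j\le i$ the entry $F_{i,j}$ is the number of edges from a parent node $v$ to a child node $w$ with rank of $v$ at most $j$ and rank of $w$ larger than $i$ (entries with a negative index are taken to be $0$). The diagonal of such a matrix is a sequence of positive integers with $F_{0,0}=2$, $F_{k,k}=F_{k-1,k-1}\pm1$ and $F_{2n-3,2n-3}=1$; there are $C_{n-1}$ such sequences. Diagonal top-down model: first choose the diagonal $(F_{k,k})_{k=0}^{2n-3}$ uniformly at random among all such valid diagonals. Then build the remaining entries row by row: for $k=1,\dots,2n-3$, given rows $0,\dots,k-1$, choose $L\in\{0,\dots,k-1\}$ with probability $(F_{k-1,L}-F_{k-1,L-1})/F_{k-1,k-1}$ and set $F_{k,j}=F_{k-1,j}$ for $j<L$ and $F_{k,j}=F_{k-1,j}-1$ for $L\le j\le k-1$.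 Equivalently, the node of rank $k$ is attached as the child end of an edge chosen uniformly at random among the $F_{k-1,k-1}$ edges whose parent has rank at most $k-1$ and whose child has not yet been placed; it is internal if $F_{k,k}=F_{k-1,k-1}+1$ and a leaf otherwise (the node of rank $2n-2$ is a leaf on the unique remaining edge). *)

theory Defs
  imports "HOL-Probability.Probability"
begin

text \<open>A fully heterochronous ranked tree shape with n leaves: nodes are identified with
their ranks 0..2n-2; the tree is given by the parent function p on ranks 1..2n-2,
with the parent having smaller rank, and every node has 0 or 2 children.\<close>
definition fh_ranked_tree :: "nat \<Rightarrow> (nat \<Rightarrow> nat) \<Rightarrow> bool" where
  "fh_ranked_tree n p \<longleftrightarrow>
     (\<forall>k\<in>{1..2*n-2}. p k < k) \<and>
     (\<forall>v\<in>{0..2*n-2}. card {k\<in>{1..2*n-2}. p k = v} \<in> {0, 2})"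

definition Fmat :: "nat \<Rightarrow> (nat \<Rightarrow> nat) \<Rightarrow> nat \<Rightarrow> nat \<Rightarrow> nat" where
  "Fmat n p i j = (if i \<le> 2*n-3 \<and> j \<le> i
      then card {k\<in>{1..2*n-2}. p k \<le> j \<and> i < k} else 0)"

text \<open>Valid diagonals (F_{k,k}) for k = 0..2n-3, as lists.\<close>
definition valid_diags :: "nat \<Rightarrow> nat list set" where
  "valid_diags n = {d. length d = 2*n-2 \<and> d!0 = 2 \<and> d!(2*n-3) = 1 \<and>
      (\<forall>k<2*n-2. 0 < d!k) \<and>
      (\<forall>k. 1 \<le> k \<and> k < 2*n-2 \<longrightarrow> d!k = d!(k-1) + 1 \<or> d!(k-1) = d!k + 1)}"

definition incr :: "(nat \<Rightarrow> nat \<Rightarrow> nat) \<Rightarrow> nat \<Rightarrow> nat \<Rightarrow> nat" where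
  "incr M k L = (if L = 0 then M (k-1) 0 else M (k-1) L - M (k-1) (L-1))"

definition choose_L :: "(nat \<Rightarrow> nat \<Rightarrow> nat) \<Rightarrow> nat \<Rightarrow> nat pmf" where
  "choose_L M k = embed_pmf (\<lambda>L. if L < k then real (incr M k L) / real (M (k-1) (k-1)) else 0)"

definition new_row :: "(nat \<Rightarrow> nat \<Rightarrow> nat) \<Rightarrow> nat \<Rightarrow> nat \<Rightarrow> nat \<Rightarrow> (nat \<Rightarrow> nat \<Rightarrow> nat)" where
  "new_row M k L dk = (\<lambda>i j. if i = k then
       (if j < L then M (k-1) j else if j \<le> k - 1 then M (k-1) j - 1 else if j = k then dk else 0)
     else M i j)"

fun build :: "nat list \<Rightarrow> nat \<Rightarrow> (nat \<Rightarrow> nat \<Rightarrow> nat) pmf" where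
  "build d 0 = return_pmf (\<lambda>i j. if i = 0 \<and> j = 0 then d!0 else 0)"
| "build d (Suc k) = do {
      M \<leftarrow> build d k;
      L \<leftarrow> choose_L M (Suc k);
      return_pmf (new_row M (Suc k) L (d!(Suc k)))
    }"

definition diag_topdown :: "nat \<Rightarrow> (nat \<Rightarrow> nat \<Rightarrow> nat) pmf" where
  "diag_topdown n = do { d \<leftarrow> pmf_of_set (valid_diags n); build d (2*n-3) }"

definition catalan :: "nat \<Rightarrow> real" where
  "catalan m = real ((2*m) choose m) / real (m + 1)"

end

theory Submission
  imports Defs
begin

text \<open>Once the diagonal \<open>d\<close> is fixed, row \<open>k\<close> of the generated matrix is determined by
  row \<open>k-1\<close>, by \<open>d!k\<close> and by the random index \<open>L\<close>. For the F-matrix of a tree with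
  parent function \<open>p\<close>, the only index reproducing row \<open>k\<close> is \<open>L = p k\<close>, since any other
  choice changes an entry of that row. This index is drawn with probability \<open>c k / F(k-1,k-1)\<close>,
  where \<open>c k\<close> is the number of children of \<open>p k\<close> of rank at least \<open>k\<close>. An internal node
  with children \<open>a < b\<close> contributes \<open>c a = 2\<close> and \<open>c b = 1\<close>, so the numerators multiply
  to \<open>2^(n-1)\<close>. The valid diagonals are the positive walks of length \<open>2n-2\<close> from 2 to 1
  with steps \<open>+1\<close> and \<open>-1\<close>; the ballot-number recursion counts \<open>C(n-1)\<close> of them.\<close>

lemma pmf_bind_eq_single:
  assumes "\<And>x. x \<in> set_pmf A \<Longrightarrow> x \<noteq> x0 \<Longrightarrow> pmf (f x) y = 0"
  shows "pmf (bind_pmf A f) y = pmf A x0 * pmf (f x0) y"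
proof -
  have "pmf (bind_pmf A f) y = (\<integral>x. pmf (f x) y \<partial>measure_pmf A)"
    by (rule pmf_bind)
  also have "\<dots> = (\<integral>x. pmf (f x0) y * indicator {x0} x \<partial>measure_pmf A)"
    by (rule integral_cong_AE) (auto simp: AE_measure_pmf_iff assms split: split_indicator)
  also have "\<dots> = pmf A x0 * pmf (f x0) y"
    by (simp add: measure_pmf_single)
  finally show ?thesis .
qed

lemma pmf_embed_pmf_finite_support:
  fixes f :: "'a \<Rightarrow> real"
  assumes "finite A" and nonneg: "\<And>x. 0 \<le> f x" and "\<And>x. x \<notin> A \<Longrightarrow> f x = 0"
    and "sum f A = 1"
  shows "pmf (embed_pmf f) x = f x"
proof (rule pmf_embed_pmf[OF nonneg])
  have "(\<integral>\<^sup>+x. ennreal (f x) \<partial>count_space UNIV) = (\<Sum>x\<in>A. ennreal (f x))"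
    using assms(1,3) by (intro nn_integral_count_space') auto
  then show "(\<integral>\<^sup>+x. ennreal (f x) \<partial>count_space UNIV) = 1"
    using assms(4) nonneg by simp
qed

lemma prod_card_greater_eq_fact:
  fixes S :: "'a::linorder set"
  assumes "finite S"
  shows "(\<Prod>i\<in>S. card {m\<in>S. i \<le> m}) = fact (card S)"
  using assms
proof (induction S rule: finite_linorder_min_induct)
  case empty
  then show ?case by simp
next
  case (insert b S)
  have "(\<Prod>i\<in>S. card {m\<in>insert b S. i \<le> m}) = (\<Prod>i\<in>S. card {m\<in>S. i \<le> m})"
    using insert.hyps(2) by (intro prod.cong refl arg_cong[where f = card]) auto
  moreover have "{m\<in>insert b S. b \<le> m} = insert b S"
    using insert.hyps(2) by auto
  ultimately show ?case
    using insert by auto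
qed

section \<open>Positive walks and ballot numbers\<close>

definition positive_walks :: "nat \<Rightarrow> nat \<Rightarrow> nat list set" where
  "positive_walks L h = {xs. length xs = Suc L \<and> xs!0 = h \<and> xs!L = 1 \<and> (\<forall>k\<le>L. 0 < xs!k) \<and>
     (\<forall>k<L. xs!Suc k = xs!k + 1 \<or> xs!k = xs!Suc k + 1)}"

lemma positive_walks_0: "positive_walks 0 h = (if h = 1 then {[1]} else {})"
  by (auto simp: positive_walks_def length_Suc_conv)

lemma positive_walks_Suc:
  "positive_walks (Suc L) h =
     (if h = 0 then {} else Cons h ` (positive_walks L (h+1) \<union> positive_walks L (h-1)))"
  (is "?lhs = ?rhs")
proof (intro set_eqI)
  have cons: "x # ys \<in> positive_walks (Suc L) h \<longleftrightarrow>
          x = h \<and> h \<noteq> 0 \<and> ys \<in> positive_walks L (h+1) \<union> positive_walks L (h-1)" for x ys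
  proof -
    have "(\<forall>k\<le>Suc L. P k) \<longleftrightarrow> P 0 \<and> (\<forall>k\<le>L. P (Suc k))" for P :: "nat \<Rightarrow> bool"
      unfolding le_simps(2)[symmetric] All_less_Suc2 ..
    then show ?thesis
      by (auto simp: positive_walks_def All_less_Suc2)
  qed
  moreover have "[] \<notin> ?lhs"
    by (simp add: positive_walks_def)
  ultimately show "xs \<in> ?lhs \<longleftrightarrow> xs \<in> ?rhs" for xs
    by (cases xs) auto
qed

lemma finite_positive_walks: "finite (positive_walks L h)"
  by (induction L arbitrary: h) (simp_all add: positive_walks_0 positive_walks_Suc)

lemma positive_walks_too_high: "Suc L < h \<Longrightarrow> positive_walks L h = {}"
  by (induction L arbitrary: h) (simp_all add: positive_walks_0 positive_walks_Suc)

lemma positive_walks_from_0: "positive_walks L 0 = {}"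
  by (auto simp: positive_walks_def)

lemma card_positive_walks_Suc:
  assumes "h \<noteq> 0"
  shows "card (positive_walks (Suc L) h) = card (positive_walks L (h+1)) + card (positive_walks L (h-1))"
proof -
  have "positive_walks L (h+1) \<inter> positive_walks L (h-1) = {}"
    by (auto simp: positive_walks_def)
  then show ?thesis
    using assms by (simp add: positive_walks_Suc card_image card_Un_disjoint finite_positive_walks)
qed

definition ballot :: "nat \<Rightarrow> nat \<Rightarrow> int" where
  "ballot a b = int ((a+b) choose b) - (if b = 0 then 0 else int ((a+b) choose (b-1)))"

lemma ballot_rec:
  assumes "a \<noteq> 0" and "b \<noteq> 0"
  shows "ballot a b = ballot (a-1) b + ballot a (b-1)"
proof -
  obtain a' b' where "a = Suc a'" "b = Suc b'"
    using assms by (metis not0_implies_Suc)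
  then show ?thesis
    by (cases b') (simp_all add: ballot_def)
qed

lemma ballot_below_diagonal: "m \<noteq> 0 \<Longrightarrow> ballot (m-1) m = 0"
  using binomial_symmetric[of "m-1" "m-1+m"] by (simp add: ballot_def)

lemma card_positive_walks: "b \<le> a \<Longrightarrow> int (card (positive_walks (a+b) (a-b+1))) = ballot a b"
proof (induction "a+b" arbitrary: a b)
  case 0
  then show ?case by (simp add: positive_walks_0 ballot_def)
next
  case (Suc L)
  note IH = Suc.hyps(1) and L = Suc.hyps(2)
  have split: "card (positive_walks (a+b) (a-b+1)) =
      card (positive_walks L (a-b+2)) + card (positive_walks L (a-b))"
    using card_positive_walks_Suc[of "a-b+1" L] L by simp
  show ?case
  proof (cases b)
    case 0
    have "positive_walks L (a-b+2) = {}"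
      using L 0 by (intro positive_walks_too_high) simp
    moreover have "int (card (positive_walks L (a-b))) = ballot L 0"
      using IH[of L 0] L 0 by simp
    ultimately show ?thesis
      using split 0 by (simp add: ballot_def)
  next
    case (Suc b')
    have up: "int (card (positive_walks L (a-b+2))) = ballot a b'"
      using IH[of a b'] L Suc Suc.prems by (simp add: Suc_diff_Suc)
    show ?thesis
    proof (cases "a = b")
      case True
      then show ?thesis
        using split up ballot_rec[of a b] ballot_below_diagonal[of a] Suc
        by (simp add: positive_walks_from_0)
    next
      case False
      have "L = (a-1) + b" "a - b = (a-1) - b + 1"
        using L Suc.prems False by auto
      then have "int (card (positive_walks L (a-b))) = ballot (a-1) b"
        using IH[of "a-1" b] Suc.prems False by simp
      then show ?thesis
        using split up ballot_rec[of a b] Suc Suc.prems by simp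
    qed
  qed
qed

lemma ballot_diagonal: "real_of_int (ballot m m) = catalan m"
proof (cases "m = 0")
  case True
  then show ?thesis by (simp add: ballot_def catalan_def)
next
  case False
  define c where "c = real ((2*m) choose m)"
  define c' where "c' = real ((2*m) choose (m-1))"
  have "ballot m m = int ((2*m) choose m) - int ((2*m) choose (m-1))"
    using False by (simp add: ballot_def mult_2)
  then have ballot: "real_of_int (ballot m m) = c - c'"
    by (simp add: c_def c'_def)
  have "Suc m * ((2*m) choose (m-1)) = m * ((2*m) choose m)"
    using binomial_absorb_comp[of "2*m" "m-1"] binomial_absorption[of "m-1" "2*m"] False
    by simp
  then have "(real m + 1) * c' = real m * c"
    unfolding c_def c'_def by (metis of_nat_Suc of_nat_mult add.commute)
  then show ?thesis
    unfolding ballot catalan_def c_def[symmetric] by (simp add: field_simps)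
qed

lemma valid_diags_eq_positive_walks:
  assumes "2 \<le> n"
  shows "valid_diags n = positive_walks (2*n-3) 2"
proof -
  have len: "2*n-2 = Suc (2*n-3)"
    using assms by simp
  have shift: "(\<forall>k. 1 \<le> k \<and> k < Suc K \<longrightarrow> P (k-1) k) \<longleftrightarrow> (\<forall>k<K. P k (Suc k))"
    for P :: "nat \<Rightarrow> nat \<Rightarrow> bool" and K
  proof (intro iffI allI impI)
    fix k
    assume "\<forall>k. 1 \<le> k \<and> k < Suc K \<longrightarrow> P (k-1) k" and "k < K"
    then show "P k (Suc k)"
      by (auto dest: spec[of _ "Suc k"])
  next
    fix k
    assume "\<forall>k<K. P k (Suc k)" and "1 \<le> k \<and> k < Suc K"
    then show "P (k-1) k"
      by (cases k) auto
  qed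
  have "d \<in> valid_diags n \<longleftrightarrow> d \<in> positive_walks (2*n-3) 2" for d
    using shift[where P = "\<lambda>i j. d!j = d!i + 1 \<or> d!i = d!j + 1" and K = "2*n-3"]
    unfolding valid_diags_def positive_walks_def len by (auto simp: less_Suc_eq_le)
  then show ?thesis
    by blast
qed

lemma card_valid_diags:
  assumes "2 \<le> n"
  shows "real (card (valid_diags n)) = catalan (n-1)"
proof -
  define m where "m = n-1"
  have "m \<noteq> 0"
    using assms by (simp add: m_def)
  have "valid_diags n = positive_walks (m + (m-1)) (m - (m-1) + 1)"
    unfolding valid_diags_eq_positive_walks[OF assms]
    by (rule arg_cong2[where f = positive_walks]) (use assms in \<open>auto simp: m_def\<close>)
  then have "int (card (valid_diags n)) = ballot m (m-1)"
    using card_positive_walks[of "m-1" m] by simp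
  also have "\<dots> = ballot m m"
    using ballot_rec[of m m] ballot_below_diagonal[of m] \<open>m \<noteq> 0\<close> by simp
  finally show ?thesis
    using ballot_diagonal[of m] by (simp add: m_def)
qed

section \<open>The F-matrix of a ranked tree\<close>

locale fh_tree =
  fixes n :: nat and p :: "nat \<Rightarrow> nat"
  assumes two_le_n: "2 \<le> n" and fh_ranked_tree: "fh_ranked_tree n p"
begin

lemma parent_less: "k \<in> {1..2*n-2} \<Longrightarrow> p k < k"
  using fh_ranked_tree by (auto simp: fh_ranked_tree_def)

lemma last_rank_eq_Suc: "2*n-2 = Suc (2*n-3)"
  using two_le_n by simp

lemma parent_le:
  assumes "k \<le> 2*n-3"
  shows "p (Suc k) \<le> k"
proof -
  have "Suc k \<in> {1..2*n-2}"
    using assms two_le_n by auto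
  from parent_less[OF this] show ?thesis
    by simp
qed

lemma card_children: "v \<le> 2*n-2 \<Longrightarrow> card {k\<in>{1..2*n-2}. p k = v} \<in> {0, 2}"
  using fh_ranked_tree by (auto simp: fh_ranked_tree_def)

definition later_children :: "nat \<Rightarrow> nat \<Rightarrow> nat" where
  "later_children i v = card {m\<in>{1..2*n-2}. p m = v \<and> i < m}"

lemma Fmat_eq_sum_later_children:
  assumes "i \<le> 2*n-3" and "j \<le> i"
  shows "Fmat n p i j = (\<Sum>v\<le>j. later_children i v)"
proof -
  let ?E = "{m\<in>{1..2*n-2}. p m \<le> j \<and> i < m}"
  have "Fmat n p i j = (\<Sum>m\<in>?E. 1)"
    using assms by (simp add: Fmat_def)
  also have "\<dots> = (\<Sum>v\<le>j. \<Sum>m\<in>{m\<in>?E. p m = v}. 1)"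
    by (rule sum.group[symmetric]) auto
  also have "\<dots> = (\<Sum>v\<le>j. later_children i v)"
    unfolding later_children_def by (intro sum.cong refl) (auto intro: arg_cong[where f = card])
  finally show ?thesis .
qed

lemma later_children_le_Fmat:
  "i \<le> 2*n-3 \<Longrightarrow> j \<le> i \<Longrightarrow> v \<le> j \<Longrightarrow> later_children i v \<le> Fmat n p i j"
  by (simp add: Fmat_eq_sum_later_children member_le_sum)

lemma Fmat_step_row:
  assumes "Suc k \<le> 2*n-3" and "j \<le> k"
  shows "Fmat n p k j = Fmat n p (Suc k) j + (if p (Suc k) \<le> j then 1 else 0)"
proof -
  have "{m\<in>{1..2*n-2}. p m \<le> j \<and> k < m} =
      {m\<in>{1..2*n-2}. p m \<le> j \<and> Suc k < m} \<union> ({Suc k} \<inter> {m. p m \<le> j})"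
    using assms by auto
  moreover have "card ({Suc k} \<inter> {m. p m \<le> j}) = (if p (Suc k) \<le> j then 1 else 0)"
    by auto
  ultimately show ?thesis
    using assms by (simp add: Fmat_def card_Un_disjoint)
qed

lemma later_children_parent_pos: "k \<le> 2*n-3 \<Longrightarrow> 0 < later_children k (p (Suc k))"
  unfolding later_children_def using two_le_n
  by (subst card_gt_0_iff) (auto intro!: exI[of _ "Suc k"])

lemma Fmat_diag_pos: "k \<le> 2*n-3 \<Longrightarrow> 0 < Fmat n p k k"
  using later_children_parent_pos later_children_le_Fmat parent_le by (meson less_le_trans order_refl)

lemma Fmat_first_diag: "Fmat n p 0 0 = 2"
proof -
  let ?C = "{k\<in>{1..2*n-2}. p k = 0}"
  have "1 \<in> ?C"
    using parent_less[of 1] two_le_n by simp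
  then have "card ?C \<noteq> 0"
    by (auto simp: card_eq_0_iff)
  moreover have "card ?C \<in> {0, 2}"
    using card_children[OF le0] .
  ultimately have "card ?C = 2"
    by (metis insertE singletonD)
  moreover have "{m\<in>{1..2*n-2}. p m \<le> 0 \<and> 0 < m} = ?C"
    by auto
  ultimately show ?thesis
    by (simp add: Fmat_def)
qed

lemma Fmat_last_diag: "Fmat n p (2*n-3) (2*n-3) = 1"
proof -
  have "{m\<in>{1..2*n-2}. p m \<le> 2*n-3 \<and> 2*n-3 < m} = {2*n-2}"
    using parent_le[of "2*n-3"] unfolding last_rank_eq_Suc by auto
  then show ?thesis
    by (simp add: Fmat_def)
qed

lemma Fmat_diag_step:
  assumes "1 \<le> k" and "k \<le> 2*n-3"
  shows "Fmat n p k k = Fmat n p (k-1) (k-1) + 1 \<or> Fmat n p (k-1) (k-1) = Fmat n p k k + 1"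
proof -
  have "Fmat n p k k = Fmat n p k (k-1) + later_children k k"
    using assms Fmat_eq_sum_later_children[of k] by (cases k) simp_all
  moreover have "Fmat n p (k-1) (k-1) = Fmat n p k (k-1) + 1"
    using assms Fmat_step_row[of "k-1" "k-1"] parent_le[of "k-1"] by simp
  moreover have "later_children k k \<in> {0, 2}"
  proof -
    have "{m\<in>{1..2*n-2}. p m = k \<and> k < m} = {m\<in>{1..2*n-2}. p m = k}"
      using parent_less by fastforce
    then show ?thesis
      using card_children[of k] assms by (simp add: later_children_def)
  qed
  ultimately show ?thesis
    by auto
qed

definition diagonal :: "nat list" where
  "diagonal = map (\<lambda>k. Fmat n p k k) [0..<2*n-2]"

lemma diagonal_in_valid_diags: "diagonal \<in> valid_diags n"
  unfolding valid_diags_def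
proof (intro CollectI conjI allI impI)
  show "length diagonal = 2*n-2" "diagonal!0 = 2" "diagonal!(2*n-3) = 1"
    using two_le_n Fmat_first_diag Fmat_last_diag last_rank_eq_Suc by (simp_all add: diagonal_def del: upt_Suc)
  show "0 < diagonal!k" if "k < 2*n-2" for k
    using that Fmat_diag_pos[of k] by (simp add: diagonal_def)
  show "diagonal!k = diagonal!(k-1) + 1 \<or> diagonal!(k-1) = diagonal!k + 1"
    if "1 \<le> k \<and> k < 2*n-2" for k
  proof -
    have "k \<le> 2*n-3" "k - 1 < 2*n-2"
      using that by auto
    then show ?thesis
      using that Fmat_diag_step[of k] by (simp add: diagonal_def)
  qed
qed

lemma valid_diag_eq_diagonal_iff:
  assumes "d \<in> valid_diags n"
  shows "(\<forall>i\<le>2*n-3. d!i = Fmat n p i i) \<longleftrightarrow> d = diagonal"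
proof -
  have "length d = 2*n-2"
    using assms by (simp add: valid_diags_def)
  then show ?thesis
    using two_le_n by (auto simp: diagonal_def list_eq_iff_nth_eq)
qed

lemma parents_in_ranks: "p ` {1..2*n-2} \<subseteq> {0..2*n-2}"
  using parent_less by fastforce

lemma sum_children_div_2: "(\<Sum>v\<in>{0..2*n-2}. card {m\<in>{1..2*n-2}. p m = v} div 2) = n - 1"
proof -
  define C where "C v = {m\<in>{1..2*n-2}. p m = v}" for v
  have "(\<Sum>v\<in>{0..2*n-2}. card (C v)) = card {1..2*n-2}"
    using sum.group[OF finite_atLeastAtMost finite_atLeastAtMost parents_in_ranks, of "\<lambda>_. 1::nat"]
    by (simp add: C_def)
  moreover have "even (card (C v))" if "v \<in> {0..2*n-2}" for v
    using card_children[of v] that unfolding C_def[symmetric] by auto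
  ultimately have "2 * (\<Sum>v\<in>{0..2*n-2}. card (C v) div 2) = 2*n-2"
    by (simp add: sum_distrib_left)
  then show ?thesis
    by (simp add: C_def)
qed

lemma prod_later_children: "(\<Prod>i\<in>{1..2*n-2}. later_children (i-1) (p i)) = 2^(n-1)"
proof -
  define C where "C v = {m\<in>{1..2*n-2}. p m = v}" for v
  have "(\<Prod>i\<in>{1..2*n-2}. later_children (i-1) (p i)) =
      (\<Prod>v\<in>{0..2*n-2}. \<Prod>i\<in>C v. card {m\<in>C v. i \<le> m})"
  proof -
    have "later_children (i-1) v = card {m\<in>C v. i \<le> m}" if "i \<in> C v" for i v
      using that unfolding later_children_def C_def by (intro arg_cong[where f = card]) auto
    then show ?thesis
      unfolding prod.group[OF finite_atLeastAtMost finite_atLeastAtMost parents_in_ranks, symmetric]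
      by (intro prod.cong refl) (auto simp: C_def)
  qed
  also have "\<dots> = (\<Prod>v\<in>{0..2*n-2}. 2 ^ (card (C v) div 2))"
  proof (intro prod.cong refl)
    fix v
    assume "v \<in> {0..2*n-2}"
    then have "card (C v) \<in> {0, 2}"
      using card_children unfolding C_def by simp
    then have "fact (card (C v)) = (2::nat) ^ (card (C v) div 2)"
      by (auto simp: numeral_2_eq_2)
    moreover have "finite (C v)"
      by (simp add: C_def)
    ultimately show "(\<Prod>i\<in>C v. card {m\<in>C v. i \<le> m}) = 2 ^ (card (C v) div 2)"
      by (simp add: prod_card_greater_eq_fact)
  qed
  also have "\<dots> = 2 ^ (\<Sum>v\<in>{0..2*n-2}. card (C v) div 2)"
    by (simp add: power_sum)
  also have "\<dots> = 2^(n-1)"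
    using sum_children_div_2 by (simp add: C_def)
  finally show ?thesis .
qed

end

section \<open>The diagonal top-down model\<close>

lemma build_rows_beyond_zero: "M \<in> set_pmf (build d k) \<Longrightarrow> k < i \<Longrightarrow> M i j = 0"
  by (induction k arbitrary: M) (auto simp: new_row_def)

context fh_tree
begin

text \<open>The state of the model after step \<open>k\<close>: rows \<open>0..k\<close> of the F-matrix.\<close>
definition Fmat_upto :: "nat \<Rightarrow> nat \<Rightarrow> nat \<Rightarrow> nat" where
  "Fmat_upto k i j = (if i \<le> k then Fmat n p i j else 0)"

lemma Fmat_upto_last: "Fmat_upto (2*n-3) = Fmat n p"
  by (intro ext) (simp add: Fmat_upto_def Fmat_def)

lemma pmf_choose_L_Fmat_upto:
  assumes "Suc k \<le> 2*n-3"
  shows "pmf (choose_L (Fmat_upto k) (Suc k)) L =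
    (if L \<le> k then real (later_children k L) / real (Fmat n p k k) else 0)"
proof -
  have incr_eq: "incr (Fmat_upto k) (Suc k) L = later_children k L" if "L \<le> k" for L
    using that assms Fmat_eq_sum_later_children[of k L] Fmat_eq_sum_later_children[of k "L-1"]
    by (cases L) (simp_all add: incr_def Fmat_upto_def)
  have "choose_L (Fmat_upto k) (Suc k) =
      embed_pmf (\<lambda>L. if L \<le> k then real (later_children k L) / real (Fmat n p k k) else 0)"
    unfolding choose_L_def
    by (intro arg_cong[where f = embed_pmf] ext) (simp add: incr_eq Fmat_upto_def less_Suc_eq_le)
  also have "pmf \<dots> L = (if L \<le> k then real (later_children k L) / real (Fmat n p k k) else 0)"
  proof (rule pmf_embed_pmf_finite_support[where A = "{..k}"])
    have "(\<Sum>L\<le>k. real (later_children k L)) = real (Fmat n p k k)"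
      using assms Fmat_eq_sum_later_children[of k k] by simp
    then show "(\<Sum>L\<le>k. if L \<le> k then real (later_children k L) / real (Fmat n p k k) else 0) = 1"
      using Fmat_diag_pos[of k] assms by (simp add: sum_divide_distrib[symmetric])
  qed simp_all
  finally show ?thesis .
qed

text \<open>Positivity of \<open>F(k,L)\<close> excludes the truncated subtraction \<open>0 - 1 = 0\<close> in column \<open>L\<close>.\<close>
lemma new_row_Fmat_upto_iff:
  assumes k: "Suc k \<le> 2*n-3" and L: "L \<le> k" "0 < Fmat n p k L"
  shows "new_row (Fmat_upto k) (Suc k) L dk = Fmat_upto (Suc k) \<longleftrightarrow>
    L = p (Suc k) \<and> dk = Fmat n p (Suc k) (Suc k)"
proof
  assume eq: "new_row (Fmat_upto k) (Suc k) L dk = Fmat_upto (Suc k)"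
  have row: "new_row (Fmat_upto k) (Suc k) L dk (Suc k) j = Fmat n p (Suc k) j" for j
    using fun_cong[OF fun_cong[OF eq, of "Suc k"], of j] by (simp add: Fmat_upto_def)
  have "\<not> L < p (Suc k)"
  proof
    assume "L < p (Suc k)"
    then show False
      using row[of L] L Fmat_step_row[OF k, of L] by (simp add: new_row_def Fmat_upto_def)
  qed
  moreover have "\<not> p (Suc k) < L"
  proof
    assume "p (Suc k) < L"
    then show False
      using row[of "p (Suc k)"] L Fmat_step_row[OF k, of "p (Suc k)"]
      by (simp add: new_row_def Fmat_upto_def)
  qed
  moreover have "dk = Fmat n p (Suc k) (Suc k)"
    using row[of "Suc k"] L by (simp add: new_row_def)
  ultimately show "L = p (Suc k) \<and> dk = Fmat n p (Suc k) (Suc k)"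
    by simp
next
  assume "L = p (Suc k) \<and> dk = Fmat n p (Suc k) (Suc k)"
  then show "new_row (Fmat_upto k) (Suc k) L dk = Fmat_upto (Suc k)"
    using k parent_le[of k] Fmat_step_row[OF k]
    by (intro ext) (auto simp: new_row_def Fmat_upto_def Fmat_def[of n p "Suc k"] le_Suc_eq)
qed

lemma new_row_eq_Fmat_upto_imp:
  assumes "\<And>i j. k < i \<Longrightarrow> M i j = 0" and "new_row M (Suc k) L dk = Fmat_upto (Suc k)"
  shows "M = Fmat_upto k"
proof (intro ext)
  fix i j
  show "M i j = Fmat_upto k i j"
  proof (cases "k < i")
    case True
    then show ?thesis
      using assms(1) by (simp add: Fmat_upto_def)
  next
    case False
    then show ?thesis
      using fun_cong[OF fun_cong[OF assms(2), of i], of j] by (simp add: new_row_def Fmat_upto_def)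
  qed
qed

definition step_prob :: "nat \<Rightarrow> real" where
  "step_prob i = real (later_children (i-1) (p i)) / real (Fmat n p (i-1) (i-1))"

lemma pmf_new_row_Fmat_upto:
  assumes k: "Suc k \<le> 2*n-3"
  shows "pmf (choose_L (Fmat_upto k) (Suc k) \<bind>
      (\<lambda>L. return_pmf (new_row (Fmat_upto k) (Suc k) L dk))) (Fmat_upto (Suc k)) =
    (if dk = Fmat n p (Suc k) (Suc k) then step_prob (Suc k) else 0)"
proof -
  let ?place = "\<lambda>L. return_pmf (new_row (Fmat_upto k) (Suc k) L dk)"
  have "pmf (choose_L (Fmat_upto k) (Suc k) \<bind> ?place) (Fmat_upto (Suc k)) =
      pmf (choose_L (Fmat_upto k) (Suc k)) (p (Suc k)) * pmf (?place (p (Suc k))) (Fmat_upto (Suc k))"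
  proof (rule pmf_bind_eq_single)
    fix L
    assume "L \<in> set_pmf (choose_L (Fmat_upto k) (Suc k))" and "L \<noteq> p (Suc k)"
    moreover from this(1) have "L \<le> k" "0 < later_children k L"
      by (auto simp: set_pmf_eq pmf_choose_L_Fmat_upto[OF k] split: if_splits)
    moreover from this have "0 < Fmat n p k L"
      using k later_children_le_Fmat[of k L L] by simp
    ultimately show "pmf (?place L) (Fmat_upto (Suc k)) = 0"
      using new_row_Fmat_upto_iff[OF k] by simp
  qed
  also have "\<dots> = (if dk = Fmat n p (Suc k) (Suc k) then step_prob (Suc k) else 0)"
  proof -
    have "0 < Fmat n p k (p (Suc k))"
      using k later_children_parent_pos[of k] later_children_le_Fmat[of k "p (Suc k)"] parent_le[of k]
      by fastforce
    then show ?thesis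
      using k parent_le[of k] new_row_Fmat_upto_iff[OF k, of "p (Suc k)"]
      by (simp add: pmf_choose_L_Fmat_upto step_prob_def indicator_def)
  qed
  finally show ?thesis .
qed

lemma pmf_build_Suc_Fmat_upto:
  assumes "Suc k \<le> 2*n-3"
  shows "pmf (build d (Suc k)) (Fmat_upto (Suc k)) = pmf (build d k) (Fmat_upto k) *
    (if d!Suc k = Fmat n p (Suc k) (Suc k) then step_prob (Suc k) else 0)"
proof -
  let ?place = "\<lambda>M L. return_pmf (new_row M (Suc k) L (d!Suc k))"
  have "pmf (build d (Suc k)) (Fmat_upto (Suc k)) =
      pmf (build d k) (Fmat_upto k) *
      pmf (choose_L (Fmat_upto k) (Suc k) \<bind> ?place (Fmat_upto k)) (Fmat_upto (Suc k))"
    unfolding build.simps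
  proof (rule pmf_bind_eq_single)
    fix M
    assume "M \<in> set_pmf (build d k)" and "M \<noteq> Fmat_upto k"
    then have "new_row M (Suc k) L (d!Suc k) \<noteq> Fmat_upto (Suc k)" for L
      using new_row_eq_Fmat_upto_imp build_rows_beyond_zero by blast
    then show "pmf (choose_L M (Suc k) \<bind> ?place M) (Fmat_upto (Suc k)) = 0"
      by (simp add: pmf_eq_0_set_pmf) metis
  qed
  then show ?thesis
    using pmf_new_row_Fmat_upto[OF assms] by simp
qed

lemma pmf_build_Fmat_upto:
  "k \<le> 2*n-3 \<Longrightarrow> pmf (build d k) (Fmat_upto k) =
    (if \<forall>i\<le>k. d!i = Fmat n p i i then \<Prod>i\<in>{1..k}. step_prob i else 0)"
proof (induction k)
  case 0
  have "(\<lambda>i j. if i = 0 \<and> j = 0 then d!0 else 0) = Fmat_upto 0 \<longleftrightarrow> d!0 = Fmat n p 0 0"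
    by (auto simp: fun_eq_iff Fmat_upto_def Fmat_def)
  then show ?case
    by (auto simp: indicator_def)
next
  case (Suc k)
  then show ?case
    using pmf_build_Suc_Fmat_upto[of k d] by (auto simp: le_Suc_eq)
qed

lemma pmf_build_Fmat:
  assumes "d \<in> valid_diags n"
  shows "pmf (build d (2*n-3)) (Fmat n p) = (if d = diagonal then \<Prod>i\<in>{1..2*n-3}. step_prob i else 0)"
  using pmf_build_Fmat_upto[of "2*n-3" d] valid_diag_eq_diagonal_iff[OF assms]
  by (simp add: Fmat_upto_last)

lemma prod_step_prob:
  "(\<Prod>i\<in>{1..2*n-3}. step_prob i) = 2^(n-1) / (\<Prod>j=1..2*n-2. real (Fmat n p (j-1) (j-1)))"
proof -
  have "{m\<in>{1..2*n-2}. p m = p (2*n-2) \<and> 2*n-3 < m} = {2*n-2}"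
    using two_le_n by auto
  then have "step_prob (2*n-2) = 1"
    using Fmat_last_diag by (simp add: step_prob_def later_children_def)
  then have "(\<Prod>i\<in>{1..2*n-3}. step_prob i) = (\<Prod>i\<in>{1..2*n-2}. step_prob i)"
    unfolding last_rank_eq_Suc by simp
  also have "\<dots> = real (\<Prod>i\<in>{1..2*n-2}. later_children (i-1) (p i)) /
      (\<Prod>j=1..2*n-2. real (Fmat n p (j-1) (j-1)))"
    by (simp add: step_prob_def prod_dividef)
  also have "\<dots> = 2^(n-1) / (\<Prod>j=1..2*n-2. real (Fmat n p (j-1) (j-1)))"
    unfolding prod_later_children by simp
  finally show ?thesis .
qed

end

theorem proposition5:
  fixes n :: nat and p :: "nat \<Rightarrow> nat"
  assumes "n \<ge> 2" and "fh_ranked_tree n p"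
  shows "pmf (diag_topdown n) (Fmat n p) =
    (1 / catalan (n-1)) * (2 ^ (n-1) / (\<Prod>j=1..2*n-2. real (Fmat n p (j-1) (j-1))))"
proof -
  interpret fh_tree n p
    using assms by unfold_locales
  have finite_diags: "finite (valid_diags n)"
    using valid_diags_eq_positive_walks[OF assms(1)] finite_positive_walks by simp
  have nonempty: "valid_diags n \<noteq> {}"
    using diagonal_in_valid_diags by blast
  have "pmf (diag_topdown n) (Fmat n p) =
      (\<Sum>d\<in>valid_diags n. pmf (build d (2*n-3)) (Fmat n p)) / card (valid_diags n)"
    by (simp add: diag_topdown_def pmf_bind integral_pmf_of_set[OF nonempty finite_diags])
  also have "(\<Sum>d\<in>valid_diags n. pmf (build d (2*n-3)) (Fmat n p)) = (\<Prod>i\<in>{1..2*n-3}. step_prob i)"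
    using finite_diags diagonal_in_valid_diags by (simp add: pmf_build_Fmat cong: sum.cong)
  finally show ?thesis
    using prod_step_prob card_valid_diags[OF assms(1)] by simp
qed

end
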